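(* Let $G^\sigma$ be a connected oriented unicyclic graph of order $n$ with girth $k$, where $n>k$. Then $sr(G^\sigma)\geq k$ if $k$ is even and $sr(G^\sigma)\geq k+1$ if $k$ is odd. This bound is sharp (it is attained, e.g., by every orientation of the graph obtained from $C_k$ by attaching $n-k$ pendant edges at one vertex of $C_k$).
   Context: An oriented graph $G^\sigma$ is a simple graph $G$ together with an orientation of each edge. Its skew-adjacency matrix $S(G^\sigma)=(s_{ij})$ has $s_{ij}=1$ if there is an arc from $v_i$ to $v_j$, $s_{ij}=-1$ if there is an arc from $v_j$ to $v_i$, and $0$ otherwise; the skew-rank $sr(G^\sigma)$ is the rank of $S(G^\sigma)$. A unicyclic graph is a connected graph with exactly one cycle; its girth is the length of that cycle. *)

theory Defs
  imports "HOL-Analysis.Analysis"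
begin

definition oriented_graph :: "('n \<Rightarrow> 'n \<Rightarrow> bool) \<Rightarrow> bool" where
  "oriented_graph A \<longleftrightarrow> (\<forall>u. \<not> A u u) \<and> (\<forall>u v. A u v \<longrightarrow> \<not> A v u)"

definition underlying :: "('n \<Rightarrow> 'n \<Rightarrow> bool) \<Rightarrow> 'n \<Rightarrow> 'n \<Rightarrow> bool" where
  "underlying A u v \<longleftrightarrow> A u v \<or> A v u"

definition skew_adj :: "('n::finite \<Rightarrow> 'n \<Rightarrow> bool) \<Rightarrow> real^'n^'n" where
  "skew_adj A = (\<chi> i j. if A i j then 1 else if A j i then -1 else 0)"

definition skew_rank :: "('n::finite \<Rightarrow> 'n \<Rightarrow> bool) \<Rightarrow> nat" where
  "skew_rank A = rank (skew_adj A)"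

text \<open>Graph notions for a simple graph given by a symmetric irreflexive relation E
  on the whole (finite) vertex type.\<close>
definition connected_graph :: "('n \<Rightarrow> 'n \<Rightarrow> bool) \<Rightarrow> bool" where
  "connected_graph E \<longleftrightarrow> (\<forall>u v. E\<^sup>*\<^sup>* u v)"

definition is_cycle :: "('n \<Rightarrow> 'n \<Rightarrow> bool) \<Rightarrow> 'n list \<Rightarrow> bool" where
  "is_cycle E xs \<longleftrightarrow> length xs \<ge> 3 \<and> distinct xs \<and>
     (\<forall>i < length xs. E (xs ! i) (xs ! ((i + 1) mod length xs)))"

text \<open>The edge set of a cycle; two cycle lists denote the same cycle iff they have
  the same edge set (rotations and reflections are identified).\<close>
definition cycle_edges :: "'n list \<Rightarrow> 'n set set" where
  "cycle_edges xs = {{xs ! i, xs ! ((i + 1) mod length xs)} | i. i < length xs}"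

definition unicyclic :: "('n \<Rightarrow> 'n \<Rightarrow> bool) \<Rightarrow> bool" where
  "unicyclic E \<longleftrightarrow> connected_graph E \<and>
     (\<exists>!C. \<exists>xs. is_cycle E xs \<and> C = cycle_edges xs)"

definition girth :: "('n \<Rightarrow> 'n \<Rightarrow> bool) \<Rightarrow> nat" where
  "girth E = Min {length xs | xs. is_cycle E xs}"

definition cycle_with_pendants_at_one_vertex :: "('n \<Rightarrow> 'n \<Rightarrow> bool) \<Rightarrow> nat \<Rightarrow> bool" where
  "cycle_with_pendants_at_one_vertex E k \<longleftrightarrow>
     (\<exists>c :: nat \<Rightarrow> 'n. inj_on c {..<k} \<and>
       (\<forall>u v. E u v \<longleftrightarrow>
          (\<exists>i<k. (u = c i \<and> v = c ((i + 1) mod k)) \<or> (v = c i \<and> u = c ((i + 1) mod k))) \<or>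
          (u = c 0 \<and> v \<notin> c ` {..<k}) \<or> (v = c 0 \<and> u \<notin> c ` {..<k})))"

end

theory Submission
  imports Defs
begin

text \<open>A shortest cycle \<open>c 0, \<dots>, c (k - 1)\<close> of a unicyclic graph is chordless, and since the
  graph is connected with more than \<open>k\<close> vertices, some vertex \<open>x\<close> off the cycle is adjacent to
  it, say to \<open>c 0\<close>; by unicyclicity \<open>x\<close> has no other neighbour on the cycle. Then
  \<open>x, c 0, c 1, \<dots>\<close> is a path on \<open>k\<close> (for even \<open>k\<close>) or \<open>k + 1\<close> (for odd \<open>k\<close>) vertices whose
  only chord joins two odd positions, and a triangular choice of pivots shows that the
  corresponding rows of the skew-adjacency matrix are linearly independent.

  For the cycle with pendant vertices at \<open>c 0\<close>, the row of every pendant vertex is a multiple of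
  the unit vector at \<open>c 0\<close>, so the rank is at most \<open>k + 1\<close>; for even \<open>k\<close> the rows of the
  odd-indexed cycle vertices moreover lie in the span of the unit vectors at the \<open>k div 2\<close>
  even-indexed ones, so the rank is at most \<open>k\<close>.\<close>

section \<open>Rank bounds from the pattern of nonzero entries\<close>

lemma rank_ge_if_rows_independent:
  fixes M :: "real^'n::finite^'m::finite" and w :: "nat \<Rightarrow> 'm"
  assumes indep: "\<And>f. (\<Sum>a<n. f a *\<^sub>R row (w a) M) = 0 \<Longrightarrow> \<forall>a<n. f a = 0"
  shows "n \<le> rank M"
proof -
  define r where "r a = row (w a) M" for a
  have inj: "inj_on r {..<n}"
  proof (rule inj_onI, rule ccontr)
    fix a b assume ab: "a \<in> {..<n}" "b \<in> {..<n}" "r a = r b" "a \<noteq> b"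
    define f :: "nat \<Rightarrow> real" where "f i = (if i = a then 1 else if i = b then -1 else 0)" for i
    have "(\<Sum>i<n. f i *\<^sub>R r i) = (\<Sum>i\<in>{a,b}. f i *\<^sub>R r i)"
      by (rule sum.mono_neutral_right) (use ab in \<open>auto simp: f_def\<close>)
    also have "\<dots> = 0" using ab by (simp add: f_def)
    finally have "f a = 0" using indep[of f] ab by (simp add: r_def)
    then show False by (simp add: f_def)
  qed
  have "independent (r ` {..<n})"
  proof (rule independent_if_scalars_zero)
    fix g x assume g: "(\<Sum>y\<in>r ` {..<n}. g y *\<^sub>R y) = 0" and x: "x \<in> r ` {..<n}"
    have "(\<Sum>a<n. g (r a) *\<^sub>R r a) = 0" using g by (simp add: sum.reindex[OF inj])
    then show "g x = 0" using indep[of "g \<circ> r"] x by (auto simp: r_def)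
  qed simp
  then have "card (r ` {..<n}) \<le> dim (rows M)"
    by (intro independent_card_le_dim) (auto simp: rows_def r_def)
  then show ?thesis by (simp add: row_rank_def card_image[OF inj])
qed

lemma rank_ge_if_pivots:
  fixes M :: "real^'n::finite^'m::finite" and w :: "nat \<Rightarrow> 'm" and q :: "nat \<Rightarrow> 'n"
    and \<mu> :: "nat \<Rightarrow> nat"
  assumes pivot: "\<And>a. a < n \<Longrightarrow> M $ w a $ q a \<noteq> 0"
    and earlier: "\<And>a b. a < n \<Longrightarrow> b < n \<Longrightarrow> b \<noteq> a \<Longrightarrow> M $ w b $ q a \<noteq> 0 \<Longrightarrow> \<mu> b < \<mu> a"
  shows "n \<le> rank M"
proof (rule rank_ge_if_rows_independent)
  fix f assume rows: "(\<Sum>a<n. f a *\<^sub>R row (w a) M) = 0"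
  have col: "(\<Sum>b<n. f b * M $ w b $ v) = 0" for v
  proof -
    have "(\<Sum>b<n. f b *\<^sub>R row (w b) M) $ v = 0" using rows by simp
    then show ?thesis by (simp add: sum_component row_def)
  qed
  have "a < n \<longrightarrow> f a = 0" for a
  proof (induction a rule: measure_induct_rule[of \<mu>])
    case (less a)
    show ?case
    proof
      assume a: "a < n"
      have "(\<Sum>b\<in>{..<n} - {a}. f b * M $ w b $ q a) = 0"
        using less earlier[OF a] by (intro sum.neutral) force
      then have "f a * M $ w a $ q a = 0"
        using col[of "q a"] sum.remove[of "{..<n}" a "\<lambda>b. f b * M $ w b $ q a"] a by simp
      then show "f a = 0" using pivot[OF a] by simp
    qed
  qed
  then show "\<forall>a<n. f a = 0" by blast
qed

lemma row_in_span_axes: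
  fixes M :: "real^'n::finite^'m::finite"
  assumes "\<And>j. M $ i $ j \<noteq> 0 \<Longrightarrow> j \<in> X"
  shows "row i M \<in> span ((\<lambda>j. axis j 1) ` X)"
proof -
  have "row i M = (\<Sum>j\<in>UNIV. (row i M $ j) *s axis j 1)" by (simp add: basis_expansion)
  also have "\<dots> \<in> span ((\<lambda>j. axis j 1) ` X)"
  proof (rule span_sum)
    fix j
    show "(row i M $ j) *s axis j (1::real) \<in> span ((\<lambda>j. axis j 1) ` X)"
      using assms[of j] by (cases "M $ i $ j = 0")
        (auto simp: row_def scalar_mult_eq_scaleR intro: span_zero span_scale span_base)
  qed
  finally show ?thesis .
qed

text \<open>Rows at odd positions of the path are eliminated first, in increasing order, each with
  the column of its left neighbour; then rows at even positions in decreasing order, each with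
  the column of its right neighbour. Chords between odd positions never meet these pivot columns.\<close>

lemma rank_ge_even_path:
  fixes M :: "real^'n::finite^'n" and w :: "nat \<Rightarrow> 'n"
  assumes "even n"
    and path: "\<And>a. Suc a < n \<Longrightarrow> M $ w a $ w (Suc a) \<noteq> 0 \<and> M $ w (Suc a) $ w a \<noteq> 0"
    and chords: "\<And>a b. a < n \<Longrightarrow> b < n \<Longrightarrow> M $ w a $ w b \<noteq> 0 \<Longrightarrow>
                   b = Suc a \<or> a = Suc b \<or> odd a \<and> odd b"
  shows "n \<le> rank M"
proof (rule rank_ge_if_pivots)
  define q where "q a = (if odd a then a - 1 else Suc a)" for a :: nat
  define \<mu> where "\<mu> a = (if odd a then a div 2 else n - 1 - a div 2)" for a :: nat
  fix a assume a: "a < n"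
  have Suc_a: "Suc a < n" if "even a" using a \<open>even n\<close> that by (metis Suc_lessI odd_Suc_div_two even_Suc)
  then show "M $ w a $ w (q a) \<noteq> 0"
    using path[of "a - 1"] path[of a] a by (cases "odd a") (auto simp: q_def elim: oddE)
  have qa: "q a < n" unfolding q_def using a Suc_a by auto
  fix b assume b: "b < n" "b \<noteq> a" "M $ w b $ w (q a) \<noteq> 0"
  then have adj: "q a = Suc b \<or> b = Suc (q a) \<or> odd b \<and> odd (q a)" using chords qa by blast
  show "\<mu> b < \<mu> a"
  proof (cases "odd a")
    case True
    then have "a = b + 2" using adj b(2) by (auto simp: q_def)
    then show ?thesis using True by (simp add: \<mu>_def)
  next
    case False
    then obtain h where h: "a = 2 * h" by blast
    obtain N where N: "n = 2 * N" using \<open>even n\<close> by blast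
    have "h < N" using a h N by simp
    have \<mu>a: "\<mu> a = 2 * N - 1 - h" using h N by (simp add: \<mu>_def)
    have "b = 2 * Suc h \<or> odd b" using adj b(2) h by (auto simp: q_def)
    then show ?thesis
    proof
      assume "b = 2 * Suc h"
      then show ?thesis using \<mu>a \<open>h < N\<close> N by (simp add: \<mu>_def)
    next
      assume "odd b"
      moreover have "b div 2 < N" using b(1) N by (simp add: div_less_iff_less_mult)
      ultimately show ?thesis using \<mu>a \<open>h < N\<close> by (simp add: \<mu>_def)
    qed
  qed
qed

lemma rank_le_card_rows_plus_support:
  fixes M :: "real^'n::finite^'m::finite"
  assumes "\<And>i j. i \<notin> R \<Longrightarrow> M $ i $ j \<noteq> 0 \<Longrightarrow> j \<in> X"
  shows "rank M \<le> card R + card X"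
proof -
  define T where "T = (\<lambda>i. row i M) ` R \<union> (\<lambda>j. axis j 1) ` X"
  have "rows M \<subseteq> span T"
  proof
    fix r assume "r \<in> rows M"
    then obtain i where "r = row i M" by (auto simp: rows_def)
    moreover have "row i M \<in> span T" if "i \<in> R" using that by (intro span_base) (simp add: T_def)
    moreover have "row i M \<in> span T" if "i \<notin> R"
      using row_in_span_axes[of M i X] assms that span_mono[of _ T] by (auto simp: T_def)
    ultimately show "r \<in> span T" by blast
  qed
  then have "rank M \<le> card T" unfolding row_rank_def by (intro dim_le_card) (simp_all add: T_def)
  also have "\<dots> \<le> card R + card X"
    unfolding T_def by (rule card_Un_le[THEN order_trans]) (intro add_mono card_image_le; simp)
  finally show ?thesis .
qed

lemma skew_adj_nonzero_iff:
  "oriented_graph A \<Longrightarrow> skew_adj A $ u $ v \<noteq> 0 \<longleftrightarrow> underlying A u v"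
  by (auto simp: skew_adj_def underlying_def oriented_graph_def)

lemma symp_underlying: "symp (underlying A)"
  by (auto simp: symp_def underlying_def)

text \<open>The path is \<open>x, c 0, c 1, \<dots>\<close> on \<open>k\<close> or \<open>k + 1\<close> vertices; for odd \<open>k\<close> the edge
  between \<open>c (k - 1)\<close> and \<open>c 0\<close> is a chord between the odd positions \<open>k\<close> and \<open>1\<close>.\<close>

lemma skew_rank_ge_cycle_with_neighbour:
  fixes A :: "'n::finite \<Rightarrow> 'n \<Rightarrow> bool" and c :: "nat \<Rightarrow> 'n"
  assumes og: "oriented_graph A"
    and cycle: "\<And>i j. i < k \<Longrightarrow> j < k \<Longrightarrow>
                  underlying A (c i) (c j) \<longleftrightarrow> j = Suc i mod k \<or> i = Suc j mod k"
    and nbr: "\<And>j. j < k \<Longrightarrow> underlying A x (c j) \<longleftrightarrow> j = 0"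
  shows "(if even k then k else k + 1) \<le> skew_rank A" (is "?n \<le> _")
  unfolding skew_rank_def
proof (rule rank_ge_even_path[where w = "case_nat x c"])
  show "even ?n" by simp
next
  fix a assume a: "Suc a < ?n"
  have "underlying A (case_nat x c a) (case_nat x c (Suc a))"
  proof (cases a)
    case 0 then show ?thesis using nbr a by (simp split: if_splits)
  next
    case (Suc i) then show ?thesis using cycle[of i "Suc i"] a by (simp split: if_splits)
  qed
  then show "skew_adj A $ case_nat x c a $ case_nat x c (Suc a) \<noteq> 0 \<and>
      skew_adj A $ case_nat x c (Suc a) $ case_nat x c a \<noteq> 0"
    by (auto simp: skew_adj_nonzero_iff[OF og] underlying_def)
next
  fix a b assume ab: "a < ?n" "b < ?n" and "skew_adj A $ case_nat x c a $ case_nat x c b \<noteq> 0"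
  then have adj: "underlying A (case_nat x c a) (case_nat x c b)"
    by (simp add: skew_adj_nonzero_iff[OF og])
  show "b = Suc a \<or> a = Suc b \<or> odd a \<and> odd b"
  proof (cases a; cases b)
    fix j assume "a = 0" "b = Suc j"
    then show ?thesis using adj nbr[of j] ab by (auto split: if_splits)
  next
    fix i assume "a = Suc i" "b = 0"
    moreover from this have "underlying A x (c i)" using adj by (auto simp: underlying_def)
    ultimately show ?thesis using nbr[of i] ab by (auto split: if_splits)
  next
    fix i j assume "a = Suc i" "b = Suc j"
    then show ?thesis using adj cycle[of i j] ab by (auto simp: mod_Suc split: if_splits)
  qed (use adj og in \<open>auto simp: underlying_def oriented_graph_def\<close>)
qed

section \<open>Shortest cycles and unicyclic graphs\<close>

lemma is_cycleI:
  assumes "distinct zs" "3 \<le> length zs"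
    and "\<And>i. Suc i < length zs \<Longrightarrow> E (zs ! i) (zs ! Suc i)"
    and "E (zs ! (length zs - 1)) (zs ! 0)"
  shows "is_cycle E zs"
  unfolding is_cycle_def
proof (intro conjI allI impI)
  fix i assume "i < length zs"
  then consider "Suc i < length zs" | "Suc i = length zs" by (metis Suc_lessI)
  then show "E (zs ! i) (zs ! ((i + 1) mod length zs))"
  proof cases
    case 2
    then have "i = length zs - 1" "(i + 1) mod length zs = 0" by simp_all
    then show ?thesis using assms(4) by simp
  qed (use assms(3) in simp)
qed (use assms in auto)

lemma is_cycle_rotate:
  assumes "is_cycle E xs"
  shows "is_cycle E (rotate p xs)"
  unfolding is_cycle_def
proof (intro conjI allI impI)
  fix i assume i: "i < length (rotate p xs)"
  define l where "l = length xs"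
  have "0 < l" using i unfolding l_def length_rotate by linarith
  then have "(p + i) mod l < l" "(i + 1) mod l < l" by simp_all
  then have "E (xs ! ((p + i) mod l)) (xs ! (((p + i) mod l + 1) mod l))"
    using assms unfolding is_cycle_def l_def by blast
  moreover have "((p + i) mod l + 1) mod l = (p + (i + 1) mod l) mod l"
    by (simp add: mod_simps)
  ultimately show "E (rotate p xs ! i) (rotate p xs ! ((i + 1) mod length (rotate p xs)))"
    using i \<open>(i + 1) mod l < l\<close> by (simp add: nth_rotate l_def)
qed (use assms in \<open>auto simp: is_cycle_def\<close>)

lemma cycle_edges_subset: "e \<in> cycle_edges xs \<Longrightarrow> e \<subseteq> set xs"
  by (auto simp: cycle_edges_def intro!: nth_mem mod_less_divisor)

lemma finite_cycle_lengths:
  fixes E :: "'n::finite \<Rightarrow> 'n \<Rightarrow> bool"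
  shows "finite {length xs | xs. is_cycle E xs}"
proof (rule finite_subset)
  show "{length xs | xs. is_cycle E xs} \<subseteq> {..CARD('n)}"
    by (auto simp: is_cycle_def distinct_card[symmetric] card_mono)
qed simp

lemma girth_le:
  fixes E :: "'n::finite \<Rightarrow> 'n \<Rightarrow> bool"
  assumes "is_cycle E xs"
  shows "girth E \<le> length xs"
  unfolding girth_def using assms by (intro Min_le finite_cycle_lengths) blast

lemma girth_attained:
  fixes E :: "'n::finite \<Rightarrow> 'n \<Rightarrow> bool"
  assumes "is_cycle E xs"
  obtains ys where "is_cycle E ys" "length ys = girth E"
proof -
  have "girth E \<in> {length xs | xs. is_cycle E xs}"
    unfolding girth_def using assms by (intro Min_in finite_cycle_lengths) blast
  then obtain ys where "girth E = length ys" "is_cycle E ys" by blast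
  then show thesis using that[of ys] by simp
qed

lemma is_cycle_adj_Suc:
  assumes "is_cycle E ys" "Suc i < length ys"
  shows "E (ys ! i) (ys ! Suc i)"
  using assms unfolding is_cycle_def by (metis Suc_eq_plus1 Suc_lessD mod_less)

lemma shortest_cycle_chordless:
  assumes "symp E" "is_cycle E ys"
    and shortest: "\<And>zs. is_cycle E zs \<Longrightarrow> length ys \<le> length zs"
    and ij: "i < j" "j < length ys" and chord: "E (ys ! i) (ys ! j)"
  shows "j = Suc i \<or> (i = 0 \<and> j = length ys - 1)"
proof (rule ccontr)
  assume not_edge: "\<not> (j = Suc i \<or> (i = 0 \<and> j = length ys - 1))"
  define zs where "zs = drop i (take (Suc j) ys)"
  have len: "length zs = Suc j - i" using ij by (simp add: zs_def)
  have nth: "zs ! l = ys ! (i + l)" if "l < Suc j - i" for l using ij that by (simp add: zs_def)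
  have "is_cycle E zs"
  proof (rule is_cycleI)
    show "distinct zs" using \<open>is_cycle E ys\<close> by (simp add: zs_def is_cycle_def)
    show "3 \<le> length zs" using len not_edge ij by linarith
  next
    fix l assume l: "Suc l < length zs"
    then have "E (ys ! (i + l)) (ys ! Suc (i + l))"
      using is_cycle_adj_Suc[OF \<open>is_cycle E ys\<close>, of "i + l"] ij len by simp
    then show "E (zs ! l) (zs ! Suc l)" using l len ij nth by simp
  next
    show "E (zs ! (length zs - 1)) (zs ! 0)"
      using chord \<open>symp E\<close> len nth ij by (simp add: sympD)
  qed
  then show False using shortest[of zs] len not_edge ij by linarith
qed

lemma shortest_cycle_adj_iff:
  assumes "symp E" "irreflp E" "is_cycle E ys"
    and shortest: "\<And>zs. is_cycle E zs \<Longrightarrow> length ys \<le> length zs"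
    and "i < length ys" "j < length ys"
  shows "E (ys ! i) (ys ! j) \<longleftrightarrow> j = Suc i mod length ys \<or> i = Suc j mod length ys"
proof
  have "3 \<le> length ys" using \<open>is_cycle E ys\<close> by (simp add: is_cycle_def)
  have cyclic: "b = Suc a mod length ys \<or> a = Suc b mod length ys"
    if "a < b" "b < length ys" "b = Suc a \<or> (a = 0 \<and> b = length ys - 1)" for a b
    using that \<open>3 \<le> length ys\<close> by (auto simp: mod_Suc)
  assume edge: "E (ys ! i) (ys ! j)"
  then have "i \<noteq> j" using \<open>irreflp E\<close> by (auto dest: irreflpD)
  then consider "i < j" | "j < i" by linarith
  then show "j = Suc i mod length ys \<or> i = Suc j mod length ys"
  proof cases
    case 1
    then have "j = Suc i \<or> (i = 0 \<and> j = length ys - 1)"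
      using shortest_cycle_chordless[OF assms(1,3) shortest] \<open>j < length ys\<close> edge by blast
    then show ?thesis using cyclic[of i j] 1 \<open>j < length ys\<close> by blast
  next
    case 2
    moreover have "E (ys ! j) (ys ! i)" using \<open>symp E\<close> edge by (rule sympD)
    ultimately have "i = Suc j \<or> (j = 0 \<and> i = length ys - 1)"
      using shortest_cycle_chordless[OF assms(1,3) shortest] \<open>i < length ys\<close> by blast
    then show ?thesis using cyclic[of j i] 2 \<open>i < length ys\<close> by blast
  qed
next
  assume "j = Suc i mod length ys \<or> i = Suc j mod length ys"
  then show "E (ys ! i) (ys ! j)"
    using \<open>is_cycle E ys\<close> \<open>symp E\<close> assms(5,6) unfolding is_cycle_def by (auto dest: sympD)
qed

lemma rtranclp_exit_edge:
  assumes "r\<^sup>*\<^sup>* a b" "P a" "\<not> P b"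
  shows "\<exists>u v. r u v \<and> P u \<and> \<not> P v"
  using assms by (induction rule: rtranclp_induct) blast+

lemma unicyclic_cycle_edges_eq:
  assumes "unicyclic E" "is_cycle E xs" "is_cycle E ys"
  shows "cycle_edges xs = cycle_edges ys"
  using assms unfolding unicyclic_def by blast

lemma unicyclic_neighbour_of_cycle:
  assumes "unicyclic E" "symp E" "is_cycle E ys" "x \<notin> set ys" "E x (ys ! 0)" "j < length ys"
  shows "E x (ys ! j) \<longleftrightarrow> j = 0"
proof
  assume edge: "E x (ys ! j)"
  show "j = 0"
  proof (rule ccontr)
    assume "j \<noteq> 0"
    \<comment> \<open>a second cycle, through the edge between \<open>x\<close> and \<open>ys ! 0\<close>\<close>
    define zs where "zs = x # take (Suc j) ys"
    have len: "length zs = j + 2" using \<open>j < length ys\<close> by (simp add: zs_def)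
    have "is_cycle E zs"
    proof (rule is_cycleI)
      show "distinct zs"
        using \<open>is_cycle E ys\<close> \<open>x \<notin> set ys\<close> by (auto simp: zs_def is_cycle_def dest: in_set_takeD)
      show "3 \<le> length zs" using len \<open>j \<noteq> 0\<close> by simp
    next
      fix l assume l: "Suc l < length zs"
      show "E (zs ! l) (zs ! Suc l)"
      proof (cases l)
        case 0 then show ?thesis using assms(5,6) by (simp add: zs_def)
      next
        case (Suc l')
        then have "E (ys ! l') (ys ! Suc l')"
          using is_cycle_adj_Suc[OF \<open>is_cycle E ys\<close>, of l'] l len assms(6) by simp
        then show ?thesis using Suc l len assms(6) by (simp add: zs_def)
      qed
    next
      have "E (ys ! j) x" using \<open>symp E\<close> edge by (rule sympD)
      then show "E (zs ! (length zs - 1)) (zs ! 0)" using len assms(6) by (simp add: zs_def)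
    qed
    then have "cycle_edges zs = cycle_edges ys"
      using unicyclic_cycle_edges_eq assms(1,3) by blast
    moreover have "{x, ys ! 0} \<in> cycle_edges zs"
      unfolding cycle_edges_def using len by (auto intro!: exI[of _ 0] simp: zs_def)
    ultimately show False using cycle_edges_subset \<open>x \<notin> set ys\<close> by blast
  qed
qed (use assms(5) in simp)

lemma unicyclic_shortest_cycle_with_neighbour:
  fixes E :: "'n::finite \<Rightarrow> 'n \<Rightarrow> bool"
  assumes uc: "unicyclic E" and "symp E" and big: "girth E < CARD('n)"
  obtains ys x where "is_cycle E ys" "length ys = girth E" "x \<notin> set ys"
    "\<And>j. j < length ys \<Longrightarrow> E x (ys ! j) \<longleftrightarrow> j = 0"
proof -
  obtain xs0 where "is_cycle E xs0" using uc unfolding unicyclic_def by blast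
  then obtain xs where xs: "is_cycle E xs" "length xs = girth E" by (rule girth_attained)
  have "card (set xs) < CARD('n)" using xs big by (simp add: is_cycle_def distinct_card)
  then obtain y where "y \<notin> set xs" by (metis UNIV_I card_mono finite subsetI linorder_not_le)
  moreover have "xs ! 0 \<in> set xs" using xs(1) by (auto simp: is_cycle_def intro!: nth_mem)
  moreover have "E\<^sup>*\<^sup>* (xs ! 0) y" using uc by (simp add: unicyclic_def connected_graph_def)
  ultimately obtain u x where ux: "E u x" "u \<in> set xs" "x \<notin> set xs"
    using rtranclp_exit_edge[of E "xs ! 0" y "\<lambda>v. v \<in> set xs"] by blast
  then obtain p where "p < length xs" "u = xs ! p" by (auto simp: in_set_conv_nth)
  define ys where "ys = rotate p xs"
  have ys: "is_cycle E ys" "length ys = girth E" "x \<notin> set ys"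
    using xs ux(3) is_cycle_rotate by (auto simp: ys_def)
  moreover have "ys ! 0 = u"
    using \<open>p < length xs\<close> \<open>u = xs ! p\<close> nth_rotate[of 0 xs p] by (cases xs) (simp_all add: ys_def)
  then have "E x (ys ! 0)" using ux(1) \<open>symp E\<close> by (simp add: sympD)
  ultimately show thesis
    using that unicyclic_neighbour_of_cycle[OF uc \<open>symp E\<close> ys(1,3)] by blast
qed

lemma skew_rank_unicyclic_ge:
  fixes A :: "'n::finite \<Rightarrow> 'n \<Rightarrow> bool"
  assumes og: "oriented_graph A" and uc: "unicyclic (underlying A)"
    and g: "girth (underlying A) = k" and big: "k < CARD('n)"
  shows "(if even k then k else k + 1) \<le> skew_rank A"
proof -
  have irr: "irreflp (underlying A)"
    using og by (auto simp: irreflp_def underlying_def oriented_graph_def)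
  obtain ys x where ys: "is_cycle (underlying A) ys" "length ys = k" "x \<notin> set ys"
    and nbr: "\<And>j. j < length ys \<Longrightarrow> underlying A x (ys ! j) \<longleftrightarrow> j = 0"
    using unicyclic_shortest_cycle_with_neighbour[OF uc symp_underlying] g big by metis
  have shortest: "length ys \<le> length zs" if "is_cycle (underlying A) zs" for zs
    using girth_le[OF that] g ys(2) by simp
  show ?thesis
  proof (rule skew_rank_ge_cycle_with_neighbour[OF og])
    show "underlying A (ys ! i) (ys ! j) \<longleftrightarrow> j = Suc i mod k \<or> i = Suc j mod k"
      if "i < k" "j < k" for i j
      using shortest_cycle_adj_iff[OF symp_underlying irr ys(1) shortest] that ys(2) by simp
    show "underlying A x (ys ! j) \<longleftrightarrow> j = 0" if "j < k" for j
      using nbr that ys(2) by simp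
  qed
qed

section \<open>The cycle with pendant vertices at one vertex\<close>

lemma cycle_with_pendants_at_one_vertexE:
  assumes "cycle_with_pendants_at_one_vertex E k" "0 < k"
  obtains c where "inj_on c {..<k}"
    and "\<And>i j. i < k \<Longrightarrow> j < k \<Longrightarrow> E (c i) (c j) \<longleftrightarrow> j = Suc i mod k \<or> i = Suc j mod k"
    and "\<And>u v. u \<notin> c ` {..<k} \<Longrightarrow> E u v \<longleftrightarrow> v = c 0"
    and "\<And>u v. u \<notin> c ` {..<k} \<Longrightarrow> E v u \<longleftrightarrow> v = c 0"
proof -
  obtain c where inj: "inj_on c {..<k}" and E: "\<And>u v. E u v \<longleftrightarrow>
      (\<exists>i<k. (u = c i \<and> v = c ((i + 1) mod k)) \<or> (v = c i \<and> u = c ((i + 1) mod k))) \<or>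
      (u = c 0 \<and> v \<notin> c ` {..<k}) \<or> (v = c 0 \<and> u \<notin> c ` {..<k})"
    using assms(1) unfolding cycle_with_pendants_at_one_vertex_def by blast
  have c_eq: "c i = c j \<longleftrightarrow> i = j" if "i < k" "j < k" for i j
    using inj that by (auto dest: inj_onD)
  show thesis
  proof (rule that[OF inj])
    fix i j assume ij: "i < k" "j < k"
    have "E (c i) (c j) \<longleftrightarrow>
        (\<exists>l<k. (c i = c l \<and> c j = c (Suc l mod k)) \<or> (c j = c l \<and> c i = c (Suc l mod k)))"
      using E[of "c i" "c j"] ij by auto
    also have "\<dots> \<longleftrightarrow> (\<exists>l<k. (i = l \<and> j = Suc l mod k) \<or> (j = l \<and> i = Suc l mod k))"
      using ij assms(2) by (auto simp: c_eq)
    finally show "E (c i) (c j) \<longleftrightarrow> j = Suc i mod k \<or> i = Suc j mod k" using ij by auto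
  next
    fix u v assume "u \<notin> c ` {..<k}"
    then show "E u v \<longleftrightarrow> v = c 0" "E v u \<longleftrightarrow> v = c 0"
      using E[of u v] E[of v u] assms(2) by auto
  qed
qed

lemma skew_rank_cycle_with_pendants_le:
  fixes A :: "'n::finite \<Rightarrow> 'n \<Rightarrow> bool"
  assumes og: "oriented_graph A" and cp: "cycle_with_pendants_at_one_vertex (underlying A) k"
    and "0 < k"
  shows "skew_rank A \<le> (if even k then k else k + 1)"
proof -
  obtain c where inj: "inj_on c {..<k}"
    and cycle: "\<And>i j. i < k \<Longrightarrow> j < k \<Longrightarrow>
                  underlying A (c i) (c j) \<longleftrightarrow> j = Suc i mod k \<or> i = Suc j mod k"
    and pendant: "\<And>u v. u \<notin> c ` {..<k} \<Longrightarrow> underlying A u v \<longleftrightarrow> v = c 0"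
    and pendant': "\<And>u v. u \<notin> c ` {..<k} \<Longrightarrow> underlying A v u \<longleftrightarrow> v = c 0"
    by (rule cycle_with_pendants_at_one_vertexE[OF cp \<open>0 < k\<close>]) blast
  note nonzero = skew_adj_nonzero_iff[OF og]
  show ?thesis
  proof (cases "even k")
    case True
    define R where "R = (\<lambda>i. c (2 * i)) ` {..<k div 2}"
    have "j \<in> R" if "i \<notin> R" "underlying A i j" for i j
    proof (cases "i \<in> c ` {..<k}")
      case False
      then show ?thesis using that pendant \<open>0 < k\<close> \<open>even k\<close> by (force simp: R_def)
    next
      case True
      then obtain l where l: "l < k" "i = c l" by blast
      then have "odd l" using \<open>i \<notin> R\<close> \<open>even k\<close> by (auto simp: R_def elim!: evenE)
      have "j \<in> c ` {..<k}"
      proof (rule ccontr)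
        assume "j \<notin> c ` {..<k}"
        then have "c l = c 0" using pendant'[of j i] that(2) l by simp
        then have "l = 0" using inj l(1) \<open>0 < k\<close> by (auto dest: inj_onD)
        then show False using \<open>odd l\<close> by simp
      qed
      then obtain m where m: "m < k" "j = c m" by blast
      then have "even m" using cycle[of l m] that(2) l \<open>odd l\<close> \<open>even k\<close> by (auto simp: mod_Suc split: if_splits)
      then show ?thesis using m \<open>even k\<close> by (auto simp: R_def elim!: evenE)
    qed
    then have "skew_rank A \<le> card R + card R"
      unfolding skew_rank_def by (intro rank_le_card_rows_plus_support) (simp add: nonzero)
    also have "card R \<le> k div 2" unfolding R_def using card_image_le by fastforce
    finally show ?thesis using True by simp
  next
    case False
    have "j \<in> {c 0}" if "i \<notin> c ` {..<k}" "underlying A i j" for i j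
      using that pendant by simp
    then have "skew_rank A \<le> card (c ` {..<k}) + card {c 0}"
      unfolding skew_rank_def by (intro rank_le_card_rows_plus_support) (simp add: nonzero)
    also have "card (c ` {..<k}) \<le> k" using card_image_le by fastforce
    finally show ?thesis using False by simp
  qed
qed

lemma skew_rank_cycle_with_pendants_ge:
  fixes A :: "'n::finite \<Rightarrow> 'n \<Rightarrow> bool"
  assumes og: "oriented_graph A" and cp: "cycle_with_pendants_at_one_vertex (underlying A) k"
    and "0 < k" and big: "k < CARD('n)"
  shows "(if even k then k else k + 1) \<le> skew_rank A"
proof -
  obtain c where inj: "inj_on c {..<k}"
    and cycle: "\<And>i j. i < k \<Longrightarrow> j < k \<Longrightarrow>
                  underlying A (c i) (c j) \<longleftrightarrow> j = Suc i mod k \<or> i = Suc j mod k"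
    and pendant: "\<And>u v. u \<notin> c ` {..<k} \<Longrightarrow> underlying A u v \<longleftrightarrow> v = c 0"
    by (rule cycle_with_pendants_at_one_vertexE[OF cp \<open>0 < k\<close>]) blast
  have "card (c ` {..<k}) < CARD('n)" using big card_image_le[of "{..<k}" c] by simp
  then obtain x where x: "x \<notin> c ` {..<k}" by (metis UNIV_I card_mono finite subsetI linorder_not_le)
  show ?thesis
  proof (rule skew_rank_ge_cycle_with_neighbour[OF og cycle])
    show "underlying A x (c j) \<longleftrightarrow> j = 0" if "j < k" for j
      using pendant[OF x] inj that \<open>0 < k\<close> by (auto dest: inj_onD)
  qed
qed

theorem theorem4p3:
  fixes k :: nat
  assumes "k \<ge> 3" and "CARD('n::finite) > k"
  shows "(\<forall>A :: 'n \<Rightarrow> 'n \<Rightarrow> bool.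
            oriented_graph A \<and> unicyclic (underlying A) \<and> girth (underlying A) = k \<longrightarrow>
            skew_rank A \<ge> (if even k then k else k + 1))
       \<and> (\<forall>A :: 'n \<Rightarrow> 'n \<Rightarrow> bool.
            oriented_graph A \<and> cycle_with_pendants_at_one_vertex (underlying A) k \<longrightarrow>
            skew_rank A = (if even k then k else k + 1))"
proof (intro conjI allI impI; elim conjE)
  fix A :: "'n \<Rightarrow> 'n \<Rightarrow> bool"
  assume "oriented_graph A" "unicyclic (underlying A)" "girth (underlying A) = k"
  then show "skew_rank A \<ge> (if even k then k else k + 1)"
    using skew_rank_unicyclic_ge assms(2) by blast
next
  fix A :: "'n \<Rightarrow> 'n \<Rightarrow> bool"
  assume A: "oriented_graph A" "cycle_with_pendants_at_one_vertex (underlying A) k"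
  have "0 < k" using assms(1) by simp
  show "skew_rank A = (if even k then k else k + 1)"
    using skew_rank_cycle_with_pendants_le[OF A \<open>0 < k\<close>]
      skew_rank_cycle_with_pendants_ge[OF A \<open>0 < k\<close> assms(2)] by linarith
qed

end
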